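(* Let $X$, $\mu$, $d$, $k$, $\mathfrak d_+$, $\mathbf z\mapsto f_{\mathbf z}$ and $\Delta$ be as follows: $X$ a metric space with probability measure $\mu$, $d,k\in\mathbb N$, $\mathfrak d_+\subset\mathbb R^d$ a nonempty open cone, $\mathbf z\mapsto f_{\mathbf z}$ a continuous homomorphism from $\mathfrak d_+$ to the semigroup of $\mu$-preserving measurable self-maps of $X$, $\Delta$ a $k$-DL function on $X$. Let $t_0\in\mathbb R$ and $r:[t_0,\infty)\to\mathbb R$ quasi-increasing with $\int_{t_0}^\infty t^{d-1}e^{-kr(t)}\,dt=\infty$. Assume there is a lattice $\Sigma\subset\mathbb R^d$ such that $\mathcal B(\Delta)$ is Borel–Cantelli for $F=\{f_{\mathbf z}:\mathbf z\in\mathfrak d_+\cap\Sigma\}$. Then for $\mu$-almost every $x\in X$ there exist $\mathbf z\in\mathfrak d_+$ with $\|\mathbf z\|$ arbitrarily large such that $\Delta(f_{\mathbf z}(x))\ge r(\|\mathbf z\|)$. Consequently, for $\mu$-almost every $x$, $$\limsup_{\mathbf z\in\mathfrak d_+,\ \mathbf z\to\infty}\frac{\Delta(f_{\mathbf z}(x))}{\log\|\mathbf z\|}\ge\frac dk.$$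
   Context: Distance between self-maps: $\sup_x\mathrm{dist}_X(f_1(x),f_2(x))$. $\Phi_\Delta(z)=\mu(\{x:\Delta(x)\ge z\})$; $\Delta$ is $k$-DL if uniformly continuous and $C_1e^{-kz}\le\Phi_\Delta(z)\le C_2e^{-kz}$ for all $z\ge0$, some $C_1,C_2>0$. $r$ is quasi-increasing if for some $C$, $r(t_2)>r(t_1)-C$ whenever $t_1\le t_2<t_1+1$. $\mathcal B(\Delta)=\{\{x:\Delta(x)\ge s\}:s\in\mathbb R\}$. For a countable family $F=\{f_i\}_{i\in I}$ of $\mu$-preserving maps, $\mathcal B$ is Borel–Cantelli for $F$ if for every family $\{A_i\}_{i\in I}$ of sets in $\mathcal B$, $\{x: f_i(x)\in A_i$ for infinitely many $i\}$ has measure $0$ when $\sum_i\mu(A_i)<\infty$ and measure $1$ when $\sum_i\mu(A_i)=\infty$. *)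

theory Defs
  imports "HOL-Probability.Probability"
begin

definition pos_cone :: "'v::real_vector set \<Rightarrow> bool" where
  "pos_cone C \<longleftrightarrow> (\<forall>z\<in>C. \<forall>t::real. t > 0 \<longrightarrow> t *\<^sub>R z \<in> C)"

definition meas_pres :: "'a measure \<Rightarrow> ('a \<Rightarrow> 'a) \<Rightarrow> bool" where
  "meas_pres M f \<longleftrightarrow> f \<in> M \<rightarrow>\<^sub>M M \<and> distr M M f = M"

definition map_dist :: "('a::metric_space \<Rightarrow> 'a) \<Rightarrow> ('a \<Rightarrow> 'a) \<Rightarrow> ereal" where
  "map_dist f1 f2 = (SUP x. ereal (dist (f1 x) (f2 x)))"

definition Phi :: "'a measure \<Rightarrow> ('a \<Rightarrow> real) \<Rightarrow> real \<Rightarrow> real" where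
  "Phi M \<Delta> z = measure M {x\<in>space M. \<Delta> x \<ge> z}"

definition kDL :: "'a::metric_space measure \<Rightarrow> nat \<Rightarrow> ('a \<Rightarrow> real) \<Rightarrow> bool" where
  "kDL M k \<Delta> \<longleftrightarrow> uniformly_continuous_on UNIV \<Delta> \<and>
     (\<exists>C1>0. \<exists>C2>0. \<forall>z\<ge>0. C1 * exp (- real k * z) \<le> Phi M \<Delta> z \<and>
                              Phi M \<Delta> z \<le> C2 * exp (- real k * z))"

definition quasi_increasing :: "real \<Rightarrow> (real \<Rightarrow> real) \<Rightarrow> bool" where
  "quasi_increasing t0 r \<longleftrightarrow> (\<exists>C. \<forall>t1 t2. t0 \<le> t1 \<longrightarrow> t1 \<le> t2 \<longrightarrow> t2 < t1 + 1 \<longrightarrow> r t2 > r t1 - C)"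

definition is_lattice :: "(real ^ 'n) set \<Rightarrow> bool" where
  "is_lattice L \<longleftrightarrow> (\<exists>A :: real ^ 'n ^ 'n. invertible A \<and>
      L = (\<lambda>m::'n \<Rightarrow> int. A *v (\<chi> i. real_of_int (m i))) ` UNIV)"

definition borel_cantelli :: "'a measure \<Rightarrow> ('a \<Rightarrow> real) \<Rightarrow> 'i set \<Rightarrow> ('i \<Rightarrow> 'a \<Rightarrow> 'a) \<Rightarrow> bool" where
  "borel_cantelli M \<Delta> I f \<longleftrightarrow>
     (\<forall>s :: 'i \<Rightarrow> real.
        let A = (\<lambda>i. {x\<in>space M. \<Delta> x \<ge> s i});
            E = {x\<in>space M. infinite {i\<in>I. f i x \<in> A i}};
            S = (\<integral>\<^sup>+ i. emeasure M (A i) \<partial>count_space I)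
        in (S < \<infinity> \<longrightarrow> emeasure M E = 0) \<and> (S = \<infinity> \<longrightarrow> emeasure M E = 1))"

end

theory Submission
  imports Defs
begin

text \<open>
  Only the lattice points of the cone matter. The Borel--Cantelli hypothesis turns divergence of
  the series of \<open>\<mu>{\<Delta> \<ge> r (norm z)}\<close> over \<open>z \<in> C \<inter> \<Sigma>\<close> into almost surely infinitely many hits,
  and since a lattice has only finitely many points in each ball, these hits have arbitrarily
  large norm. For the divergence, the lattice points of the open cone are counted in spherical
  shells \<open>u - L < norm z \<le> u\<close>: a box of about u^(d-1) integer points, lying in a slice
  transversal to a fixed lattice direction \<open>w \<in> C\<close>, is pushed along \<open>w\<close> into the shell.
  Together with the lower bound \<open>\<mu>{\<Delta> \<ge> s} \<ge> C1 exp (-k s)\<close> and the quasi-monotonicity of \<open>r\<close>,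
  the shell sums dominate the divergent integral of t^(d-1) exp (-k r(t)). The logarithmic bound
  is the case \<open>r t = d / k * ln t\<close>, for which the integrand is \<open>1 / t\<close>.
\<close>

section \<open>Quasi-increasing functions and divergent integrals\<close>

lemma quasi_increasing_chain:
  fixes r :: "real \<Rightarrow> real"
  assumes step: "\<And>t1 t2. t0 \<le> t1 \<Longrightarrow> t1 \<le> t2 \<Longrightarrow> t2 < t1 + 1 \<Longrightarrow> r t1 - C < r t2"
  shows "t0 \<le> t1 \<Longrightarrow> t1 \<le> t2 \<Longrightarrow> t2 < t1 + real n \<Longrightarrow> r t1 - real n * C < r t2"
proof (induction n arbitrary: t1)
  case 0
  then show ?case by simp
next
  case (Suc n)
  show ?case
  proof (cases "n = 0")
    case True
    then show ?thesis using step Suc.prems by simp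
  next
    case False
    define t' where "t' = t1 + (t2 - t1) / real (Suc n)"
    have "t1 \<le> t'" and "t' < t1 + 1"
      using Suc.prems by (simp_all add: t'_def divide_less_eq)
    moreover have "t' \<le> t2"
      using divide_left_mono[of 1 "real (Suc n)" "t2 - t1"] Suc.prems by (simp add: t'_def)
    moreover have "t2 < t' + real n"
    proof -
      have "t2 - t' = (t2 - t1) * real n / real (Suc n)"
        by (simp add: t'_def field_simps)
      also have "\<dots> < real n"
        using Suc.prems False by (simp add: divide_less_eq)
      finally show ?thesis by simp
    qed
    ultimately have "r t1 - C < r t'" and "r t' - real n * C < r t2"
      using step Suc.IH Suc.prems by auto
    then show ?thesis by (simp add: algebra_simps)
  qed
qed

lemma quasi_increasing_exp_bound:
  fixes r :: "real \<Rightarrow> real" and k L :: real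
  assumes "quasi_increasing t0 r" and "k \<ge> 0"
  obtains E where "E \<ge> 1"
    and "\<And>t1 t2. t0 \<le> t1 \<Longrightarrow> t1 \<le> t2 \<Longrightarrow> t2 < t1 + L \<Longrightarrow> exp (- k * r t2) \<le> E * exp (- k * r t1)"
proof -
  obtain C where step: "\<And>t1 t2. t0 \<le> t1 \<Longrightarrow> t1 \<le> t2 \<Longrightarrow> t2 < t1 + 1 \<Longrightarrow> r t1 - max C 0 < r t2"
    using assms(1) unfolding quasi_increasing_def by (meson le_less_trans max.cobounded1 diff_left_mono)
  define n where "n = nat \<lceil>L\<rceil>"
  have "L \<le> real n"
    unfolding n_def by (rule real_nat_ceiling_ge)
  show ?thesis
  proof
    show "1 \<le> exp (k * real n * max C 0)" using \<open>k \<ge> 0\<close> by simp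
    fix t1 t2 assume "t0 \<le> t1" "t1 \<le> t2" "t2 < t1 + L"
    then have "r t1 - real n * max C 0 < r t2"
      using \<open>L \<le> real n\<close> by (intro quasi_increasing_chain[OF step]) auto
    then have "k * (r t1 - real n * max C 0) \<le> k * r t2"
      using \<open>k \<ge> 0\<close> by (intro mult_left_mono) auto
    then have "- k * r t2 \<le> k * real n * max C 0 + - k * r t1"
      by (simp add: algebra_simps)
    then show "exp (- k * r t2) \<le> exp (k * real n * max C 0) * exp (- k * r t1)"
      by (simp flip: exp_add)
  qed
qed

lemma mono_on_imp_quasi_increasing:
  assumes "mono_on {t0..} r"
  shows "quasi_increasing t0 r"
proof -
  have "r t1 - 1 < r t2" if "t0 \<le> t1" and "t1 \<le> t2" for t1 t2
    using mono_onD[OF assms, of t1 t2] that by simp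
  then show ?thesis
    unfolding quasi_increasing_def by blast
qed

lemma nn_integral_atLeast_le_suminf:
  fixes g :: "real \<Rightarrow> ennreal" and b :: "nat \<Rightarrow> ennreal" and L t0 :: real
  assumes "L > 0"
    and bound: "\<And>m t. t0 + L * real m \<le> t \<Longrightarrow> t < t0 + L * real m + L \<Longrightarrow> g t \<le> b m"
  shows "(\<integral>\<^sup>+ t\<in>{t0..}. g t \<partial>lborel) \<le> ennreal L * (\<Sum>m. b m)"
proof -
  define I where "I m = {t0 + L * real m ..< t0 + L * real m + L}" for m
  have cover: "g t * indicator {t0..} t \<le> (\<Sum>m. b m * indicator (I m) t)" for t
  proof (cases "t0 \<le> t")
    case True
    define m where "m = nat \<lfloor>(t - t0) / L\<rfloor>"
    have "real m \<le> (t - t0) / L" and "(t - t0) / L < real m + 1"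
      using True \<open>L > 0\<close> by (simp_all add: m_def)
    then have "t \<in> I m"
      using \<open>L > 0\<close> by (simp add: I_def field_simps)
    then have "g t * indicator {t0..} t \<le> b m * indicator (I m) t"
      using bound[of m t] True by (simp add: I_def)
    also have "\<dots> \<le> (\<Sum>m. b m * indicator (I m) t)"
      using sum_le_suminf[of "\<lambda>m. b m * indicator (I m) t" "{m}"] by (simp del: sum_mult_indicator)
    finally show ?thesis .
  qed simp
  have "(\<integral>\<^sup>+ t\<in>{t0..}. g t \<partial>lborel) \<le> (\<integral>\<^sup>+ t. (\<Sum>m. b m * indicator (I m) t) \<partial>lborel)"
    by (intro nn_integral_mono cover)
  also have "\<dots> = (\<Sum>m. \<integral>\<^sup>+ t. b m * indicator (I m) t \<partial>lborel)"
    by (intro nn_integral_suminf) (simp add: I_def)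
  also have "\<dots> = (\<Sum>m. b m * ennreal L)"
    using \<open>L > 0\<close> by (simp add: I_def nn_integral_cmult_indicator)
  finally show ?thesis by (simp add: mult.commute)
qed

lemma quasi_increasing_series_diverges:
  fixes r :: "real \<Rightarrow> real" and k d :: nat and L :: real
  assumes "quasi_increasing t0 r" and "L > 0"
    and div: "(\<integral>\<^sup>+ t\<in>{t0..}. ennreal (t ^ d * exp (- real k * r t)) \<partial>lborel) = \<infinity>"
  shows "(\<Sum>m. ennreal ((\<bar>t0 + L * real m\<bar> + L) ^ d * exp (- real k * r (t0 + L * real m)))) = \<infinity>"
proof -
  obtain E where "E \<ge> 1" and E: "\<And>t1 t2. t0 \<le> t1 \<Longrightarrow> t1 \<le> t2 \<Longrightarrow> t2 < t1 + L \<Longrightarrow>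
                                  exp (- real k * r t2) \<le> E * exp (- real k * r t1)"
    by (rule quasi_increasing_exp_bound[OF assms(1) of_nat_0_le_iff]) auto
  define a where "a m = (\<bar>t0 + L * real m\<bar> + L) ^ d * exp (- real k * r (t0 + L * real m))" for m
  have bound: "ennreal (t ^ d * exp (- real k * r t)) \<le> ennreal (E * a m)"
    if "t0 + L * real m \<le> t" and "t < t0 + L * real m + L" for m t
  proof (intro ennreal_leI)
    have "t ^ d \<le> \<bar>t\<bar> ^ d"
      by (metis abs_ge_self power_abs)
    also have "\<dots> \<le> (\<bar>t0 + L * real m\<bar> + L) ^ d"
      using that by (intro power_mono) auto
    finally have "t ^ d \<le> (\<bar>t0 + L * real m\<bar> + L) ^ d" .
    moreover have "exp (- real k * r t) \<le> E * exp (- real k * r (t0 + L * real m))"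
      using that \<open>L > 0\<close> by (intro E) auto
    ultimately have "t ^ d * exp (- real k * r t)
        \<le> (\<bar>t0 + L * real m\<bar> + L) ^ d * (E * exp (- real k * r (t0 + L * real m)))"
      using \<open>L > 0\<close> by (intro mult_mono) auto
    then show "t ^ d * exp (- real k * r t) \<le> E * a m"
      by (simp add: a_def mult.left_commute)
  qed
  have "\<infinity> \<le> ennreal L * (\<Sum>m. ennreal (E * a m))"
    unfolding div[symmetric] by (rule nn_integral_atLeast_le_suminf[OF \<open>L > 0\<close> bound])
  also have "\<dots> = ennreal L * ennreal E * (\<Sum>m. ennreal (a m))"
    using \<open>E \<ge> 1\<close> by (simp add: ennreal_mult' mult.assoc)
  finally show ?thesis
    by (simp add: a_def top_unique ennreal_mult_eq_top_iff)
qed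

lemma suminf_cmult_min_1_shift_eq_top:
  fixes a :: "nat \<Rightarrow> real"
  assumes "c > 0" and nonneg: "\<And>m. a m \<ge> 0" and diverges: "(\<Sum>m. ennreal (a m)) = \<infinity>"
  shows "(\<Sum>m. ennreal (c * min 1 (a (m + m0)))) = \<infinity>"
proof (rule ccontr)
  assume "(\<Sum>m. ennreal (c * min 1 (a (m + m0)))) \<noteq> \<infinity>"
  then have "summable (\<lambda>m. c * min 1 (a (m + m0)))"
    using \<open>c > 0\<close> by (intro summable_suminf_not_top) (auto simp: nonneg)
  then have summable_min: "summable (\<lambda>m. min 1 (a (m + m0)))"
    using \<open>c > 0\<close> by (simp add: summable_cmult_iff)
  then have "(\<lambda>m. min 1 (a (m + m0))) \<longlonglongrightarrow> 0"
    by (rule summable_LIMSEQ_zero)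
  then have "eventually (\<lambda>m. min 1 (a (m + m0)) < 1) sequentially"
    by (rule order_tendstoD) simp
  then have "eventually (\<lambda>m. min 1 (a (m + m0)) = a (m + m0)) sequentially"
    by eventually_elim auto
  then have "summable a"
    using summable_min summable_cong by fastforce
  then have "(\<Sum>m. ennreal (a m)) = ennreal (suminf a)"
    by (intro suminf_ennreal2) (auto simp: nonneg)
  then show False using diverges by simp
qed

lemma nn_integral_inverse_atLeast_1: "(\<integral>\<^sup>+ t\<in>{1..}. ennreal (1 / t) \<partial>lborel) = \<infinity>"
proof (rule ccontr)
  assume "(\<integral>\<^sup>+ t\<in>{1..}. ennreal (1 / t) \<partial>lborel) \<noteq> \<infinity>" (is "?I \<noteq> _")
  then obtain y where y: "?I = ennreal y" "y \<ge> 0"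
    by (cases ?I rule: ennreal_cases) auto
  have "ennreal (ln (exp (y + 1)) - ln 1) = (\<integral>\<^sup>+ t. ennreal (1 / t) * indicator {1..exp (y + 1)} t \<partial>lborel)"
    using \<open>y \<ge> 0\<close>
    by (intro nn_integral_FTC_Icc[symmetric]) (auto intro!: DERIV_ln_divide)
  also have "\<dots> \<le> (\<integral>\<^sup>+ t\<in>{1..}. ennreal (1 / t) \<partial>lborel)"
    by (intro nn_integral_mono) (simp split: split_indicator)
  finally have "ennreal (y + 1) \<le> ennreal y"
    using y by simp
  then show False
    using \<open>y \<ge> 0\<close> by (simp add: ennreal_le_iff2)
qed

lemma nn_integral_log_profile_diverges:
  fixes k n :: nat
  assumes "k > 0" and "n \<ge> 1"
  shows "(\<integral>\<^sup>+ t\<in>{1..}. ennreal (t ^ (n - 1) * exp (- real k * (real n / real k * ln t))) \<partial>lborel) = \<infinity>"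
proof -
  have pointwise: "t ^ (n - 1) * exp (- real k * (real n / real k * ln t)) = 1 / t" if "t \<ge> 1" for t :: real
  proof -
    have "- real k * (real n / real k * ln t) = - ln (t ^ n)"
      using \<open>k > 0\<close> that by (simp add: ln_realpow)
    then have "exp (- real k * (real n / real k * ln t)) = inverse (t ^ n)"
      using that by (simp add: exp_minus)
    moreover have "t ^ n = t * t ^ (n - 1)"
      using \<open>n \<ge> 1\<close> by (simp flip: power_Suc)
    ultimately show ?thesis
      using that by (simp add: field_simps)
  qed
  have "(\<integral>\<^sup>+ t\<in>{1..}. ennreal (t ^ (n - 1) * exp (- real k * (real n / real k * ln t))) \<partial>lborel)
      = (\<integral>\<^sup>+ t\<in>{1..}. ennreal (1 / t) \<partial>lborel)"
  proof (rule nn_integral_cong)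
    fix t :: real
    show "ennreal (t ^ (n - 1) * exp (- real k * (real n / real k * ln t))) * indicator {1..} t
        = ennreal (1 / t) * indicator {1..} t"
    proof (cases "1 \<le> t")
      case True
      then show ?thesis
        by (simp only: pointwise)
    qed simp
  qed
  then show ?thesis
    using nn_integral_inverse_atLeast_1 by simp
qed

section \<open>Lattices and integer boxes\<close>

definition int_vec :: "('n::finite \<Rightarrow> int) \<Rightarrow> real ^ 'n" where
  "int_vec m = (\<chi> i. real_of_int (m i))"

lemma int_vec_nth [simp]: "int_vec m $ i = real_of_int (m i)"
  by (simp add: int_vec_def)

lemma int_vec_add: "int_vec (\<lambda>i. m i + m' i) = int_vec m + int_vec m'"
  by (simp add: vec_eq_iff)

lemma inj_int_vec: "inj int_vec"
  by (auto simp: inj_def vec_eq_iff fun_eq_iff)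

lemma is_lattice_int_vec:
  fixes L :: "(real ^ 'n::finite) set"
  shows "is_lattice L \<longleftrightarrow> (\<exists>A :: real ^ 'n ^ 'n. invertible A \<and> L = range (\<lambda>m. A *v int_vec m))"
  by (simp add: is_lattice_def int_vec_def)

lemma lattice_add:
  fixes L :: "(real ^ 'n::finite) set"
  assumes "is_lattice L" and "z \<in> L" and "w \<in> L"
  shows "z + w \<in> L"
proof -
  obtain A :: "real ^ 'n ^ 'n" where L: "L = range (\<lambda>m. A *v int_vec m)"
    using assms(1) unfolding is_lattice_int_vec by blast
  then obtain m m' where "z = A *v int_vec m" and "w = A *v int_vec m'"
    using assms(2,3) by blast
  then have "z + w = A *v int_vec (\<lambda>i. m i + m' i)"
    by (simp add: int_vec_add matrix_vector_right_distrib)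
  then show ?thesis
    unfolding L by blast
qed

lemma lattice_bounded_finite:
  fixes L :: "(real ^ 'n::finite) set"
  assumes "is_lattice L"
  shows "finite {z \<in> L. norm z \<le> R}"
proof -
  obtain A :: "real ^ 'n ^ 'n" where "invertible A" and L: "L = range (\<lambda>m. A *v int_vec m)"
    using assms unfolding is_lattice_int_vec by blast
  then obtain B where BA: "B ** A = mat 1"
    unfolding invertible_def by blast
  obtain K where "K > 0" and K: "\<And>x. norm (B *v x) \<le> norm x * K"
    using bounded_linear.pos_bounded[OF matrix_vector_mul_bounded_linear[of B]] by blast
  define N where "N = \<lceil>R * K\<rceil>"
  have "m \<in> (\<Pi>\<^sub>E j\<in>UNIV. {-N..N})" if "norm (A *v int_vec m) \<le> R" for m
  proof -
    have "\<bar>real_of_int (m j)\<bar> \<le> R * K" for j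
    proof -
      have "\<bar>real_of_int (m j)\<bar> = \<bar>(B *v (A *v int_vec m)) $ j\<bar>"
        using BA by (simp add: matrix_vector_mul_assoc)
      also have "\<dots> \<le> norm (A *v int_vec m) * K"
        using component_le_norm_cart K order_trans by blast
      also have "\<dots> \<le> R * K"
        using that \<open>K > 0\<close> by (intro mult_right_mono) auto
      finally show ?thesis .
    qed
    then have "\<bar>m j\<bar> \<le> N" for j
      unfolding N_def by (metis ceiling_mono ceiling_of_int of_int_abs)
    then show ?thesis
      by (auto simp: abs_le_iff minus_le_iff)
  qed
  then have "{z \<in> L. norm z \<le> R} \<subseteq> (\<lambda>m. A *v int_vec m) ` (\<Pi>\<^sub>E j\<in>UNIV. {-N..N})"
    unfolding L by blast
  then show ?thesis
    by (rule finite_subset) (intro finite_imageI finite_PiE; simp)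
qed

text \<open>
  Integer points within sup-distance \<open>\<rho>\<close> of \<open>c\<close>, with the \<open>j0\<close>-th coordinate frozen: the translates
  of such a box along an integer vector \<open>v\<close> with \<open>v j0 \<noteq> 0\<close> are pairwise disjoint.
\<close>
definition int_box :: "real ^ 'n \<Rightarrow> real \<Rightarrow> 'n::finite \<Rightarrow> ('n \<Rightarrow> int) set" where
  "int_box c \<rho> j0 = (\<Pi>\<^sub>E j\<in>UNIV. if j = j0 then {\<lfloor>c $ j\<rfloor>} else {\<lceil>c $ j - \<rho>\<rceil>..\<lfloor>c $ j + \<rho>\<rfloor>})"

lemma finite_int_box: "finite (int_box c \<rho> j0)"
  unfolding int_box_def by (intro finite_PiE) auto

lemma int_box_coord: "m \<in> int_box c \<rho> j0 \<Longrightarrow> m j0 = \<lfloor>c $ j0\<rfloor>"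
  by (auto simp: int_box_def PiE_iff dest!: spec[of _ j0])

lemma int_box_near:
  assumes "\<rho> \<ge> 1" and "m \<in> int_box c \<rho> j0"
  shows "\<bar>real_of_int (m j) - c $ j\<bar> \<le> \<rho>"
proof (cases "j = j0")
  case True
  then have "\<bar>real_of_int (m j) - c $ j\<bar> < 1"
    using int_box_coord[OF assms(2)] by simp linarith
  then show ?thesis
    using assms(1) by simp
next
  case False
  then have "m j \<in> {\<lceil>c $ j - \<rho>\<rceil>..\<lfloor>c $ j + \<rho>\<rfloor>}"
    using assms(2) by (auto simp: int_box_def PiE_iff dest!: spec[of _ j])
  then show ?thesis
    by (simp add: abs_le_iff ceiling_le_iff le_floor_iff)
qed

lemma floor_in_int_box:
  assumes "\<rho> \<ge> 1"
  shows "(\<lambda>j. \<lfloor>c $ j\<rfloor>) \<in> int_box c \<rho> j0"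
proof -
  have "c $ j - \<rho> \<le> of_int \<lfloor>c $ j\<rfloor>" for j
    using real_of_int_floor_gt_diff_one[of "c $ j"] assms by linarith
  then show ?thesis
    using assms by (auto simp: int_box_def PiE_iff ceiling_le_iff intro: floor_mono)
qed

lemma norm_int_box:
  fixes c :: "real ^ 'n::finite"
  assumes "\<rho> \<ge> 1" and "m \<in> int_box c \<rho> j0"
  shows "norm (int_vec m - c) \<le> real CARD('n) * \<rho>"
proof -
  have "norm (int_vec m - c) \<le> (\<Sum>j\<in>UNIV. \<bar>(int_vec m - c) $ j\<bar>)"
    by (rule norm_le_l1_cart)
  also have "\<dots> \<le> (\<Sum>j\<in>(UNIV::'n set). \<rho>)"
    by (intro sum_mono) (use int_box_near[OF assms] in simp)
  finally show ?thesis by simp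
qed

lemma card_int_box:
  fixes c :: "real ^ 'n::finite"
  assumes "\<rho> \<ge> 1"
  shows "\<rho> ^ (CARD('n) - 1) \<le> real (card (int_box c \<rho> j0))"
proof -
  have interval: "\<rho> \<le> real (card {\<lceil>x - \<rho>\<rceil>..\<lfloor>x + \<rho>\<rfloor>})" for x
  proof -
    have "\<rho> \<le> real_of_int (\<lfloor>x + \<rho>\<rfloor> - \<lceil>x - \<rho>\<rceil> + 1)"
      using real_of_int_floor_gt_diff_one[of "x + \<rho>"] of_int_ceiling_le_add_one[of "x - \<rho>"] assms
      by (simp only: of_int_add of_int_diff of_int_1)
    then show ?thesis
      using assms by simp
  qed
  have "\<rho> ^ (CARD('n) - 1) = (\<Prod>j\<in>UNIV - {j0}. \<rho>)"
    by (simp add: card_Diff_singleton)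
  also have "\<dots> = (\<Prod>j\<in>UNIV. if j = j0 then 1 else \<rho>)"
    by (simp add: prod.If_cases Diff_eq)
  also have "\<dots> \<le> (\<Prod>j\<in>UNIV. real (card (if j = j0 then {\<lfloor>c $ j\<rfloor>} else {\<lceil>c $ j - \<rho>\<rceil>..\<lfloor>c $ j + \<rho>\<rfloor>})))"
    using assms interval by (intro prod_mono) auto
  also have "\<dots> = real (card (int_box c \<rho> j0))"
    by (simp add: int_box_def card_PiE)
  finally show ?thesis .
qed

lemma int_box_transversal:
  assumes "m \<in> int_box c \<rho> j0" and "m' \<in> int_box c \<rho> j0" and "v j0 \<noteq> 0"
    and eq: "int_vec m + real n *\<^sub>R int_vec v = int_vec m' + real n' *\<^sub>R int_vec v"
  shows "m = m'"
proof -
  have "m j0 = m' j0"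
    using int_box_coord[OF assms(1)] int_box_coord[OF assms(2)] by simp
  moreover have "real_of_int (m j0) + real n * real_of_int (v j0) = real_of_int (m' j0) + real n' * real_of_int (v j0)"
    using arg_cong[OF eq, of "\<lambda>y. y $ j0"] by simp
  ultimately have "n = n'"
    using \<open>v j0 \<noteq> 0\<close> by simp
  then have "int_vec m = int_vec m'"
    using eq by simp
  then show ?thesis
    by (rule injD[OF inj_int_vec])
qed

section \<open>Lattice points of a cone in spherical shells\<close>

lemma int_boxes_in_open_pos_cone:
  fixes C :: "(real ^ 'n::finite) set"
  assumes "C \<noteq> {}" and "open C" and "pos_cone C"
  obtains \<rho> p j0 where "\<rho> > 0" and "p $ j0 \<noteq> 0"
    and "\<forall>s m. s * \<rho> \<ge> 1 \<longrightarrow> m \<in> int_box (s *\<^sub>R p) (s * \<rho>) j0 \<longrightarrow> int_vec m \<in> C"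
proof -
  have "C \<noteq> {0}"
    using assms(2) not_open_singleton[of "0 :: real ^ 'n"] by auto
  then obtain p where "p \<in> C" and "p \<noteq> 0"
    using assms(1) by blast
  then obtain j0 where "p $ j0 \<noteq> 0"
    by (metis vec_eq_iff zero_index)
  obtain e where "e > 0" and ball: "ball p e \<subseteq> C"
    using assms(2) \<open>p \<in> C\<close> open_contains_ball by blast
  define \<rho> where "\<rho> = e / (2 * real CARD('n))"
  have "\<rho> > 0"
    using \<open>e > 0\<close> by (simp add: \<rho>_def)
  have box: "int_vec m \<in> C" if "s * \<rho> \<ge> 1" and m: "m \<in> int_box (s *\<^sub>R p) (s * \<rho>) j0" for s m
  proof -
    have "s > 0"
      using zero_less_mult_pos2[of s \<rho>] that(1) \<open>\<rho> > 0\<close> by simp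
    have "norm (int_vec m - s *\<^sub>R p) \<le> real CARD('n) * (s * \<rho>)"
      by (rule norm_int_box[OF that])
    also have "\<dots> = s * (e / 2)"
      by (simp add: \<rho>_def)
    finally have "norm (int_vec m - s *\<^sub>R p) / s \<le> e / 2"
      using \<open>s > 0\<close> by (simp add: divide_le_eq mult.commute)
    moreover have "(1 / s) *\<^sub>R int_vec m - p = (1 / s) *\<^sub>R (int_vec m - s *\<^sub>R p)"
      using \<open>s > 0\<close> by (simp add: scaleR_diff_right)
    ultimately have "norm ((1 / s) *\<^sub>R int_vec m - p) \<le> e / 2"
      using \<open>s > 0\<close> by simp
    then have "(1 / s) *\<^sub>R int_vec m \<in> C"
      using ball \<open>e > 0\<close> by (auto simp: dist_norm norm_minus_commute)
    then have "s *\<^sub>R ((1 / s) *\<^sub>R int_vec m) \<in> C"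
      using \<open>pos_cone C\<close> \<open>s > 0\<close> unfolding pos_cone_def by blast
    then show ?thesis
      using \<open>s > 0\<close> by simp
  qed
  show ?thesis
    using that \<open>\<rho> > 0\<close> \<open>p $ j0 \<noteq> 0\<close> box by blast
qed

lemma int_vec_direction_in_int_boxes:
  assumes "\<rho> > 0" and "p $ j0 \<noteq> 0"
    and box: "\<forall>s m. s * \<rho> \<ge> 1 \<longrightarrow> m \<in> int_box (s *\<^sub>R p) (s * \<rho>) j0 \<longrightarrow> int_vec m \<in> C"
  obtains v where "int_vec v \<in> C" and "v j0 \<noteq> 0"
proof
  define s where "s = max (1 / \<rho>) (1 / \<bar>p $ j0\<bar>)"
  have "s * \<rho> \<ge> 1"
    using \<open>\<rho> > 0\<close> by (simp add: s_def max_def divide_le_eq)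
  have "\<bar>s * p $ j0\<bar> \<ge> 1"
    using \<open>p $ j0 \<noteq> 0\<close> \<open>\<rho> > 0\<close> by (auto simp: s_def max_def abs_mult divide_le_eq)
  show "int_vec (\<lambda>j. \<lfloor>(s *\<^sub>R p) $ j\<rfloor>) \<in> C"
    using box floor_in_int_box[OF \<open>s * \<rho> \<ge> 1\<close>] \<open>s * \<rho> \<ge> 1\<close> by blast
  show "\<lfloor>(s *\<^sub>R p) $ j0\<rfloor> \<noteq> 0"
    using \<open>\<bar>s * p $ j0\<bar> \<ge> 1\<close> by (auto simp: floor_eq_iff)
qed

lemma multiple_in_shell:
  fixes x w :: "'a::real_normed_vector"
  assumes "w \<noteq> 0" and "norm w \<le> L" and "norm x \<le> u - L"
  obtains n :: nat where "u - L < norm (x + real n *\<^sub>R w)" and "norm (x + real n *\<^sub>R w) \<le> u"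
proof -
  have "\<exists>n::nat. u - L < norm (x + real n *\<^sub>R w)"
  proof -
    obtain n :: nat where "u - L + norm x < real n * norm w"
      using \<open>w \<noteq> 0\<close> ex_less_of_nat_mult[of "norm w"] by auto
    moreover have "real n * norm w - norm x \<le> norm (x + real n *\<^sub>R w)"
      using norm_diff_ineq[of "real n *\<^sub>R w" x] by (simp add: add.commute)
    ultimately show ?thesis by (intro exI[of _ n]) linarith
  qed
  define n where "n = (LEAST n. u - L < norm (x + real n *\<^sub>R w))"
  have above: "u - L < norm (x + real n *\<^sub>R w)"
    unfolding n_def by (rule LeastI_ex) fact
  then obtain n' where n': "n = Suc n'"
    using \<open>norm x \<le> u - L\<close> by (cases n) auto
  then have "norm (x + real n' *\<^sub>R w) \<le> u - L"
    using not_less_Least[of n' "\<lambda>n. u - L < norm (x + real n *\<^sub>R w)"] by (simp add: n_def)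
  then have "norm (x + real n *\<^sub>R w) \<le> u"
    using norm_triangle_ineq[of "x + real n' *\<^sub>R w" w] \<open>norm w \<le> L\<close>
    by (simp add: n' algebra_simps)
  with above show ?thesis using that by blast
qed

lemma shell_copy_of_transversal_set:
  fixes S X :: "'a::real_normed_vector set"
  assumes add: "\<And>x y. x \<in> S \<Longrightarrow> y \<in> S \<Longrightarrow> x + y \<in> S"
    and "w \<in> S" and "w \<noteq> 0" and "norm w \<le> L"
    and "finite X" and "X \<subseteq> S" and small: "\<And>x. x \<in> X \<Longrightarrow> norm x \<le> u - L"
    and transversal: "\<And>x x' n n'. x \<in> X \<Longrightarrow> x' \<in> X \<Longrightarrow>
                        x + real n *\<^sub>R w = x' + real n' *\<^sub>R w \<Longrightarrow> x = x'"
  obtains H where "finite H" and "H \<subseteq> S" and "\<forall>z\<in>H. u - L < norm z \<and> norm z \<le> u"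
    and "card H = card X"
proof -
  have choice: "\<forall>x\<in>X. \<exists>n::nat. u - L < norm (x + real n *\<^sub>R w) \<and> norm (x + real n *\<^sub>R w) \<le> u"
  proof
    fix x assume "x \<in> X"
    obtain n :: nat where "u - L < norm (x + real n *\<^sub>R w)" and "norm (x + real n *\<^sub>R w) \<le> u"
      by (rule multiple_in_shell[OF \<open>w \<noteq> 0\<close> \<open>norm w \<le> L\<close> small[OF \<open>x \<in> X\<close>]])
    then show "\<exists>n::nat. u - L < norm (x + real n *\<^sub>R w) \<and> norm (x + real n *\<^sub>R w) \<le> u"
      by blast
  qed
  obtain n where shell: "\<forall>x\<in>X. u - L < norm (x + real (n x) *\<^sub>R w) \<and> norm (x + real (n x) *\<^sub>R w) \<le> u"
    using bchoice[OF choice] by blast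
  have S_shift: "x + real k *\<^sub>R w \<in> S" if "x \<in> S" for x k
  proof (induction k)
    case (Suc k)
    have "x + real (Suc k) *\<^sub>R w = (x + real k *\<^sub>R w) + w"
      by (simp add: algebra_simps)
    also have "\<dots> \<in> S"
      using add Suc.IH \<open>w \<in> S\<close> by blast
    finally show ?case .
  qed (simp add: that)
  define f where "f x = x + real (n x) *\<^sub>R w" for x
  have "inj_on f X"
  proof (rule inj_onI)
    fix x x' assume "x \<in> X" and "x' \<in> X" and "f x = f x'"
    then show "x = x'"
      unfolding f_def by (rule transversal)
  qed
  show ?thesis
  proof (rule that[of "f ` X"])
    show "finite (f ` X)"
      using \<open>finite X\<close> by simp
    show "f ` X \<subseteq> S"
      using \<open>X \<subseteq> S\<close> S_shift by (auto simp: f_def)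
    show "\<forall>z\<in>f ` X. u - L < norm z \<and> norm z \<le> u"
      using shell by (auto simp: f_def)
    show "card (f ` X) = card X"
      by (rule card_image) fact
  qed
qed

lemma shell_copy_of_int_box:
  fixes A B :: "real ^ 'n::finite ^ 'n" and S :: "(real ^ 'n) set"
  assumes BA: "B ** A = mat 1"
    and add: "\<And>x y. x \<in> S \<Longrightarrow> y \<in> S \<Longrightarrow> x + y \<in> S"
    and v: "A *v int_vec v \<in> S" "v j0 \<noteq> 0" "norm (A *v int_vec v) \<le> L"
    and box: "\<And>m. m \<in> int_box c \<rho> j0 \<Longrightarrow> A *v int_vec m \<in> S \<and> norm (A *v int_vec m) \<le> u - L"
  obtains H where "finite H" and "H \<subseteq> S" and "\<forall>z\<in>H. u - L < norm z \<and> norm z \<le> u"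
    and "card H = card (int_box c \<rho> j0)"
proof -
  have B_A: "B *v (A *v y) = y" for y
    using BA by (simp add: matrix_vector_mul_assoc)
  define w where "w = A *v int_vec v"
  define X where "X = (\<lambda>m. A *v int_vec m) ` int_box c \<rho> j0"
  have "w \<noteq> 0"
  proof
    assume "w = 0"
    then have "int_vec v $ j0 = 0"
      using B_A[of "int_vec v"] by (simp add: w_def)
    then show False
      using \<open>v j0 \<noteq> 0\<close> by simp
  qed
  have "inj (\<lambda>m. A *v int_vec m)"
  proof (rule injI)
    fix m m' assume "A *v int_vec m = A *v int_vec m'"
    then have "int_vec m = int_vec m'"
      by (metis B_A)
    then show "m = m'"
      by (rule injD[OF inj_int_vec])
  qed
  then have "card X = card (int_box c \<rho> j0)"
    unfolding X_def by (simp add: card_image inj_on_subset)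
  have transversal: "x = x'" if x: "x \<in> X" and x': "x' \<in> X" and eq: "x + real n *\<^sub>R w = x' + real n' *\<^sub>R w"
    for x x' n n'
  proof -
    obtain m m' where m: "m \<in> int_box c \<rho> j0" "x = A *v int_vec m"
      and m': "m' \<in> int_box c \<rho> j0" "x' = A *v int_vec m'"
      using x x' unfolding X_def by blast
    have "int_vec m + real n *\<^sub>R int_vec v = int_vec m' + real n' *\<^sub>R int_vec v"
      using arg_cong[OF eq, of "\<lambda>y. B *v y"] m(2) m'(2)
      by (simp add: w_def B_A matrix_vector_right_distrib matrix_vector_mult_scaleR)
    then have "m = m'"
      by (rule int_box_transversal[where v = v, OF m(1) m'(1) \<open>v j0 \<noteq> 0\<close>])
    then show ?thesis
      using m(2) m'(2) by simp
  qed
  have "w \<in> S" and "norm w \<le> L"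
    using v by (simp_all add: w_def)
  have "finite X" and "X \<subseteq> S" and small: "\<And>x. x \<in> X \<Longrightarrow> norm x \<le> u - L"
    using box by (auto simp: X_def finite_int_box)
  obtain H where "finite H" and "H \<subseteq> S" and "\<forall>z\<in>H. u - L < norm z \<and> norm z \<le> u"
    and "card H = card X"
    by (rule shell_copy_of_transversal_set[OF add \<open>w \<in> S\<close> \<open>w \<noteq> 0\<close> \<open>norm w \<le> L\<close>
          \<open>finite X\<close> \<open>X \<subseteq> S\<close> small transversal])
  then show ?thesis
    using that \<open>card X = card (int_box c \<rho> j0)\<close> by simp
qed

lemma lattice_cone_int_boxes:
  fixes C \<Sigma> :: "(real ^ 'n::finite) set"
  assumes "is_lattice \<Sigma>" and "C \<noteq> {}" and "open C" and "pos_cone C"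
  obtains B A :: "real ^ 'n ^ 'n" and \<rho> K :: real and v :: "'n \<Rightarrow> int" and j0 :: 'n and p :: "real ^ 'n"
  where "B ** A = mat 1" and "\<rho> > 0" and "K > 0" and "A *v int_vec v \<in> C \<inter> \<Sigma>" and "v j0 \<noteq> 0"
    and "\<And>s m. s * \<rho> \<ge> 1 \<Longrightarrow> m \<in> int_box (s *\<^sub>R p) (s * \<rho>) j0 \<Longrightarrow>
           A *v int_vec m \<in> C \<inter> \<Sigma> \<and> norm (A *v int_vec m) \<le> s * K"
proof -
  obtain A :: "real ^ 'n ^ 'n" where "invertible A" and \<Sigma>: "\<Sigma> = range (\<lambda>m. A *v int_vec m)"
    using \<open>is_lattice \<Sigma>\<close> unfolding is_lattice_int_vec by blast
  then obtain B where AB: "A ** B = mat 1" and BA: "B ** A = mat 1"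
    unfolding invertible_def by blast
  define Cp where "Cp = (\<lambda>y. A *v y) -` C"
  have "B *v z \<in> Cp" if "z \<in> C" for z
    using that AB by (simp add: Cp_def matrix_vector_mul_assoc)
  then have "Cp \<noteq> {}"
    using \<open>C \<noteq> {}\<close> by blast
  have "open Cp"
    unfolding Cp_def
    by (intro open_vimage \<open>open C\<close> linear_continuous_on matrix_vector_mul_bounded_linear)
  have "pos_cone Cp"
    using \<open>pos_cone C\<close> by (simp add: pos_cone_def Cp_def matrix_vector_mult_scaleR)
  obtain \<rho> p j0 where "\<rho> > 0" and "p $ j0 \<noteq> 0"
    and box: "\<forall>s m. s * \<rho> \<ge> 1 \<longrightarrow> m \<in> int_box (s *\<^sub>R p) (s * \<rho>) j0 \<longrightarrow> int_vec m \<in> Cp"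
    by (rule int_boxes_in_open_pos_cone[OF \<open>Cp \<noteq> {}\<close> \<open>open Cp\<close> \<open>pos_cone Cp\<close>])
  obtain v where "int_vec v \<in> Cp" and "v j0 \<noteq> 0"
    by (rule int_vec_direction_in_int_boxes[OF \<open>\<rho> > 0\<close> \<open>p $ j0 \<noteq> 0\<close> box])
  obtain \<beta> where "\<beta> > 0" and \<beta>: "\<And>y. norm (A *v y) \<le> norm y * \<beta>"
    using bounded_linear.pos_bounded[OF matrix_vector_mul_bounded_linear[of A]] by blast
  define K where "K = \<beta> * (norm p + real CARD('n) * \<rho>)"
  have "K > 0"
    using \<open>\<beta> > 0\<close> \<open>\<rho> > 0\<close> by (simp add: K_def add_nonneg_pos)
  have norm_box: "norm (A *v int_vec m) \<le> s * K"
    if "s * \<rho> \<ge> 1" and m: "m \<in> int_box (s *\<^sub>R p) (s * \<rho>) j0" for s m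
  proof -
    have "s > 0"
      using zero_less_mult_pos2[of s \<rho>] that(1) \<open>\<rho> > 0\<close> by simp
    have "norm (int_vec m) \<le> norm (s *\<^sub>R p) + norm (int_vec m - s *\<^sub>R p)"
      by (rule norm_triangle_sub)
    also have "\<dots> \<le> s * norm p + real CARD('n) * (s * \<rho>)"
      using norm_int_box[OF that] \<open>s > 0\<close> by simp
    finally have "norm (int_vec m) * \<beta> \<le> (s * norm p + real CARD('n) * (s * \<rho>)) * \<beta>"
      using \<open>\<beta> > 0\<close> by (intro mult_right_mono) auto
    then show ?thesis
      using \<beta>[of "int_vec m"] by (simp add: K_def algebra_simps)
  qed
  have in_C_\<Sigma>: "A *v int_vec m \<in> C \<inter> \<Sigma>" if "int_vec m \<in> Cp" for m
    using that by (auto simp: Cp_def \<Sigma>)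
  show ?thesis
  proof (rule that[OF BA \<open>\<rho> > 0\<close> \<open>K > 0\<close> in_C_\<Sigma>[OF \<open>int_vec v \<in> Cp\<close>] \<open>v j0 \<noteq> 0\<close>])
    fix s m assume "s * \<rho> \<ge> 1" and "m \<in> int_box (s *\<^sub>R p) (s * \<rho>) j0"
    then show "A *v int_vec m \<in> C \<inter> \<Sigma> \<and> norm (A *v int_vec m) \<le> s * K"
      using box in_C_\<Sigma> norm_box by auto
  qed
qed

lemma lattice_cone_shell_count:
  fixes C \<Sigma> :: "(real ^ 'n::finite) set"
  assumes "is_lattice \<Sigma>" and "C \<noteq> {}" and "open C" and "pos_cone C"
    and C_add: "\<And>z w. z \<in> C \<Longrightarrow> w \<in> C \<Longrightarrow> z + w \<in> C"
  obtains L c U where "L \<ge> 1" and "c > 0" and "U \<ge> 0"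
    and "\<forall>u\<ge>U. \<exists>H. finite H \<and> H \<subseteq> C \<inter> \<Sigma> \<and> (\<forall>z\<in>H. u - L < norm z \<and> norm z \<le> u)
                               \<and> c * (u + L) ^ (CARD('n) - 1) \<le> real (card H)"
proof (rule lattice_cone_int_boxes[OF assms(1-4)])
  fix B A :: "real ^ 'n ^ 'n" and \<rho> K :: real and v j0 p
  assume BA: "B ** A = mat 1" and "\<rho> > 0" and "K > 0"
    and v: "A *v int_vec v \<in> C \<inter> \<Sigma>" "v j0 \<noteq> 0"
    and box: "\<And>s m. s * \<rho> \<ge> 1 \<Longrightarrow> m \<in> int_box (s *\<^sub>R p) (s * \<rho>) j0 \<Longrightarrow>
                A *v int_vec m \<in> C \<inter> \<Sigma> \<and> norm (A *v int_vec m) \<le> s * K"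
  have S_add: "x + y \<in> C \<inter> \<Sigma>" if "x \<in> C \<inter> \<Sigma>" and "y \<in> C \<inter> \<Sigma>" for x y
    using that C_add lattice_add[OF \<open>is_lattice \<Sigma>\<close>] by blast
  define L where "L = max 1 (norm (A *v int_vec v))"
  define c where "c = (\<rho> / (2 * K)) ^ (CARD('n) - 1)"
  define U where "U = max (3 * L) (L + K / \<rho>)"
  have shells: "\<exists>H. finite H \<and> H \<subseteq> C \<inter> \<Sigma> \<and> (\<forall>z\<in>H. u - L < norm z \<and> norm z \<le> u)
                    \<and> c * (u + L) ^ (CARD('n) - 1) \<le> real (card H)" if "u \<ge> U" for u
  proof -
    define s where "s = (u - L) / K"
    have "3 * L \<le> u" and "K / \<rho> \<le> u - L"
      using that by (auto simp: U_def)
    then have "s * \<rho> \<ge> 1"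
      using \<open>K > 0\<close> \<open>\<rho> > 0\<close> by (simp add: s_def field_simps)
    have "s * K = u - L"
      using \<open>K > 0\<close> by (simp add: s_def)
    then have box_u: "A *v int_vec m \<in> C \<inter> \<Sigma> \<and> norm (A *v int_vec m) \<le> u - L"
      if "m \<in> int_box (s *\<^sub>R p) (s * \<rho>) j0" for m
      using box[OF \<open>s * \<rho> \<ge> 1\<close> that] by simp
    have "norm (A *v int_vec v) \<le> L"
      by (simp add: L_def)
    obtain H where "finite H" and "H \<subseteq> C \<inter> \<Sigma>" and "\<forall>z\<in>H. u - L < norm z \<and> norm z \<le> u"
      and card_H: "card H = card (int_box (s *\<^sub>R p) (s * \<rho>) j0)"
      by (rule shell_copy_of_int_box[OF BA S_add v \<open>norm (A *v int_vec v) \<le> L\<close> box_u])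
    have "\<rho> / (2 * K) * (u + L) \<le> s * \<rho>"
      using \<open>3 * L \<le> u\<close> \<open>K > 0\<close> \<open>\<rho> > 0\<close> by (simp add: s_def field_simps)
    then have "c * (u + L) ^ (CARD('n) - 1) \<le> (s * \<rho>) ^ (CARD('n) - 1)"
      unfolding c_def power_mult_distrib[symmetric]
      using \<open>K > 0\<close> \<open>\<rho> > 0\<close> \<open>3 * L \<le> u\<close> L_def by (intro power_mono) auto
    also have "\<dots> \<le> real (card H)"
      unfolding card_H by (rule card_int_box[OF \<open>s * \<rho> \<ge> 1\<close>])
    finally show ?thesis
      using \<open>finite H\<close> \<open>H \<subseteq> C \<inter> \<Sigma>\<close> \<open>\<forall>z\<in>H. u - L < norm z \<and> norm z \<le> u\<close> by blast
  qed
  show thesis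
  proof (rule that)
    show "1 \<le> L" and "0 < c" and "0 \<le> U"
      using \<open>K > 0\<close> \<open>\<rho> > 0\<close> by (auto simp: L_def c_def U_def)
    show "\<forall>u\<ge>U. \<exists>H. finite H \<and> H \<subseteq> C \<inter> \<Sigma> \<and> (\<forall>z\<in>H. u - L < norm z \<and> norm z \<le> u)
                    \<and> c * (u + L) ^ (CARD('n) - 1) \<le> real (card H)"
      using shells by blast
  qed
qed

section \<open>The Borel--Cantelli argument\<close>

text \<open>The \<open>min\<close> accounts for negative levels, where only the monotonicity of \<open>Phi\<close> is available.\<close>
lemma kDL_Phi_lower_bound:
  fixes M :: "'a::metric_space measure"
  assumes "prob_space M" and "sets M = sets borel" and "kDL M k \<Delta>"
  obtains C1 where "C1 > 0" and "\<And>z. C1 * min 1 (exp (- real k * z)) \<le> Phi M \<Delta> z"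
proof -
  interpret prob_space M by fact
  obtain C1 where "C1 > 0" and lower: "\<And>z. z \<ge> 0 \<Longrightarrow> C1 * exp (- real k * z) \<le> Phi M \<Delta> z"
    using \<open>kDL M k \<Delta>\<close> unfolding kDL_def by blast
  have "\<Delta> \<in> borel_measurable borel"
    using \<open>kDL M k \<Delta>\<close> unfolding kDL_def
    by (intro borel_measurable_continuous_onI uniformly_continuous_imp_continuous) blast
  then have "\<Delta> \<in> borel_measurable M"
    unfolding measurable_cong_sets[OF \<open>sets M = sets borel\<close> refl] .
  then have Phi_mono: "Phi M \<Delta> z \<le> Phi M \<Delta> z'" if "z' \<le> z" for z z'
    unfolding Phi_def using that by (intro finite_measure_mono) auto
  show ?thesis
  proof (rule that[OF \<open>C1 > 0\<close>])
    fix z :: real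
    show "C1 * min 1 (exp (- real k * z)) \<le> Phi M \<Delta> z"
    proof (cases "z \<ge> 0")
      case True
      have "C1 * min 1 (exp (- real k * z)) \<le> C1 * exp (- real k * z)"
        using \<open>C1 > 0\<close> by (intro mult_left_mono) auto
      then show ?thesis
        using lower[OF True] by linarith
    next
      case False
      have "C1 * min 1 (exp (- real k * z)) \<le> C1"
        using \<open>C1 > 0\<close> by (intro mult_left_le) auto
      also have "\<dots> \<le> Phi M \<Delta> 0"
        using lower[of 0] by simp
      also have "\<dots> \<le> Phi M \<Delta> z"
        using False by (intro Phi_mono) simp
      finally show ?thesis .
    qed
  qed
qed

lemma shell_superlevel_sum_lower_bound:
  fixes M :: "'a measure" and H :: "'v::real_normed_vector set" and r :: "real \<Rightarrow> real"
  assumes "prob_space M"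
    and "C1 > 0" and Phi: "\<And>z. C1 * min 1 (exp (- real k * z)) \<le> Phi M \<Delta> z"
    and "E \<ge> 1" and E: "\<And>t1 t2. t0 \<le> t1 \<Longrightarrow> t1 \<le> t2 \<Longrightarrow> t2 < t1 + L \<Longrightarrow>
                             exp (- real k * r t2) \<le> E * exp (- real k * r t1)"
    and "L \<ge> 1" and "t0 + L \<le> u" and "0 \<le> u" and "c > 0"
    and shell: "\<And>z. z \<in> H \<Longrightarrow> u - L < norm z \<and> norm z \<le> u"
    and card: "c * (u + L) ^ d \<le> real (card H)"
  shows "ennreal (c * C1 / E * min 1 ((u + L) ^ d * exp (- real k * r u)))
           \<le> (\<Sum>z\<in>H. emeasure M {x \<in> space M. r (norm z) \<le> \<Delta> x})"
proof -
  interpret prob_space M by fact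
  define q where "q = C1 / E * min 1 (exp (- real k * r u))"
  have "q \<ge> 0"
    using \<open>C1 > 0\<close> \<open>E \<ge> 1\<close> by (simp add: q_def)
  have point: "ennreal q \<le> emeasure M {x \<in> space M. r (norm z) \<le> \<Delta> x}" if "z \<in> H" for z
  proof -
    have "exp (- real k * r u) \<le> E * exp (- real k * r (norm z))"
      using E[of "norm z" u] shell[OF that] \<open>t0 + L \<le> u\<close> by auto
    moreover have "min 1 x \<le> E * min 1 y" if "x \<le> E * y" for x y :: real
      using that \<open>E \<ge> 1\<close> by (auto simp: min_def)
    ultimately have "min 1 (exp (- real k * r u)) \<le> E * min 1 (exp (- real k * r (norm z)))"
      by blast
    then have "q \<le> C1 * min 1 (exp (- real k * r (norm z)))"
      using \<open>C1 > 0\<close> \<open>E \<ge> 1\<close> by (simp add: q_def field_simps)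
    also have "\<dots> \<le> measure M {x \<in> space M. r (norm z) \<le> \<Delta> x}"
      using Phi by (simp add: Phi_def)
    finally show ?thesis
      by (simp add: emeasure_eq_measure)
  qed
  have "1 \<le> (u + L) ^ d"
    using \<open>L \<ge> 1\<close> \<open>0 \<le> u\<close> by (intro one_le_power) linarith
  moreover have "min 1 (X * y) \<le> X * min 1 y" if "X \<ge> 1" for X y :: real
    using that mult_mono[of 1 X 1 y] by (auto simp: min_def)
  ultimately have "min 1 ((u + L) ^ d * exp (- real k * r u)) \<le> (u + L) ^ d * min 1 (exp (- real k * r u))"
    by blast
  then have "c * C1 / E * min 1 ((u + L) ^ d * exp (- real k * r u)) \<le> c * (u + L) ^ d * q"
    using \<open>c > 0\<close> \<open>C1 > 0\<close> \<open>E \<ge> 1\<close> by (simp add: q_def field_simps mult_left_mono)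
  also have "\<dots> \<le> real (card H) * q"
    using card \<open>q \<ge> 0\<close> by (rule mult_right_mono)
  finally have "ennreal (c * C1 / E * min 1 ((u + L) ^ d * exp (- real k * r u))) \<le> ennreal (real (card H) * q)"
    by (rule ennreal_leI)
  also have "\<dots> = (\<Sum>z\<in>H. ennreal q)"
    using \<open>q \<ge> 0\<close> by (simp add: ennreal_mult'' ennreal_of_nat_eq_real_of_nat)
  also have "\<dots> \<le> (\<Sum>z\<in>H. emeasure M {x \<in> space M. r (norm z) \<le> \<Delta> x})"
    by (intro sum_mono point)
  finally show ?thesis .
qed

lemma disjoint_family_shells:
  fixes H :: "nat \<Rightarrow> 'v::real_normed_vector set"
  assumes shell: "\<And>m z. z \<in> H m \<Longrightarrow> w m - L < norm z \<and> norm z \<le> w m"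
    and separated: "\<And>i j. i < j \<Longrightarrow> w i \<le> w j - L"
  shows "disjoint_family H"
  unfolding disjoint_family_on_def
proof (intro ballI impI)
  fix m n :: nat assume "m \<noteq> n"
  show "H m \<inter> H n = {}"
  proof (rule ccontr)
    assume "H m \<inter> H n \<noteq> {}"
    then obtain z where "z \<in> H m" and "z \<in> H n"
      by blast
    then show False
      using shell[of z m] shell[of z n] separated[of m n] separated[of n m] \<open>m \<noteq> n\<close>
      by (cases "m < n") auto
  qed
qed

lemma suminf_sum_disjoint_le_nn_integral_count_space:
  fixes g :: "'i \<Rightarrow> ennreal"
  assumes "disjoint_family H" and "\<And>m. finite (H m)" and "\<And>m. H m \<subseteq> I"
  shows "(\<Sum>m. \<Sum>i\<in>H m. g i) \<le> (\<integral>\<^sup>+ i. g i \<partial>count_space I)"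
proof (unfold suminf_eq_SUP, intro SUP_least)
  fix N
  have "(\<Sum>m<N. \<Sum>i\<in>H m. g i) = (\<Sum>i\<in>(\<Union>m<N. H m). g i)"
    using assms(1,2) by (intro sum.UNION_disjoint[symmetric]) (auto simp: disjoint_family_on_def)
  also have "\<dots> = (\<integral>\<^sup>+ i. g i * indicator (\<Union>m<N. H m) i \<partial>count_space I)"
    using assms
    by (subst nn_integral_indicator_finite) (auto intro!: sum.cong simp: emeasure_count_space_finite subset_eq)
  also have "\<dots> \<le> (\<integral>\<^sup>+ i. g i \<partial>count_space I)"
    by (intro nn_integral_mono) (simp split: split_indicator)
  finally show "(\<Sum>m<N. \<Sum>i\<in>H m. g i) \<le> (\<integral>\<^sup>+ i. g i \<partial>count_space I)" .
qed

lemma lattice_cone_superlevel_sum_diverges: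
  fixes M :: "'a::metric_space measure" and C \<Sigma> :: "(real ^ 'n::finite) set"
    and \<Delta> :: "'a \<Rightarrow> real" and r :: "real \<Rightarrow> real"
  assumes "prob_space M" and "sets M = sets borel" and "kDL M k \<Delta>"
    and "is_lattice \<Sigma>" and "C \<noteq> {}" and "open C" and "pos_cone C"
    and "\<And>z w. z \<in> C \<Longrightarrow> w \<in> C \<Longrightarrow> z + w \<in> C"
    and "quasi_increasing t0 r"
    and div: "(\<integral>\<^sup>+ t\<in>{t0..}. ennreal (t ^ (CARD('n) - 1) * exp (- real k * r t)) \<partial>lborel) = \<infinity>"
  shows "(\<integral>\<^sup>+ z. emeasure M {x \<in> space M. r (norm z) \<le> \<Delta> x} \<partial>count_space (C \<inter> \<Sigma>)) = \<infinity>"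
proof -
  obtain C1 where "C1 > 0" and Phi: "\<And>z. C1 * min 1 (exp (- real k * z)) \<le> Phi M \<Delta> z"
    by (rule kDL_Phi_lower_bound[OF assms(1-3)]) auto
  obtain L c U where "L \<ge> 1" and "c > 0" and "U \<ge> 0"
    and shells: "\<forall>u\<ge>U. \<exists>H. finite H \<and> H \<subseteq> C \<inter> \<Sigma> \<and> (\<forall>z\<in>H. u - L < norm z \<and> norm z \<le> u)
                               \<and> c * (u + L) ^ (CARD('n) - 1) \<le> real (card H)"
    by (rule lattice_cone_shell_count[OF assms(4-8)])
  obtain E where "E \<ge> 1" and E: "\<And>t1 t2. t0 \<le> t1 \<Longrightarrow> t1 \<le> t2 \<Longrightarrow> t2 < t1 + L \<Longrightarrow>
                                  exp (- real k * r t2) \<le> E * exp (- real k * r t1)"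
    by (rule quasi_increasing_exp_bound[OF assms(9) of_nat_0_le_iff]) auto
  define m0 where "m0 = nat \<lceil>\<bar>U - t0\<bar>\<rceil> + 1"
  define w where "w m = t0 + L * real (m + m0)" for m
  have w_ge: "U \<le> w m" "t0 + L \<le> w m" for m
  proof -
    have "1 \<le> real (m + m0)"
      by (simp add: m0_def)
    then have "real (m + m0) \<le> L * real (m + m0)" and "L \<le> L * real (m + m0)"
      using mult_right_mono[OF \<open>L \<ge> 1\<close>, of "real (m + m0)"] mult_left_mono[of 1 "real (m + m0)" L] \<open>L \<ge> 1\<close>
      by simp_all
    moreover have "\<bar>U - t0\<bar> + 1 \<le> real (m + m0)"
      unfolding m0_def by linarith
    ultimately show "U \<le> w m" "t0 + L \<le> w m"
      unfolding w_def by linarith+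
  qed
  have ex_H: "\<forall>m. \<exists>H. finite H \<and> H \<subseteq> C \<inter> \<Sigma> \<and> (\<forall>z\<in>H. w m - L < norm z \<and> norm z \<le> w m)
               \<and> c * (w m + L) ^ (CARD('n) - 1) \<le> real (card H)"
    using shells w_ge(1) by blast
  obtain H where H: "\<forall>m. finite (H m) \<and> H m \<subseteq> C \<inter> \<Sigma> \<and> (\<forall>z\<in>H m. w m - L < norm z \<and> norm z \<le> w m)
                            \<and> c * (w m + L) ^ (CARD('n) - 1) \<le> real (card (H m))"
    using choice[OF ex_H] by blast
  have separated: "w i \<le> w j - L" if "i < j" for i j
  proof -
    have "L * (real (i + m0) + 1) \<le> L * real (j + m0)"
      using that \<open>L \<ge> 1\<close> by (intro mult_left_mono) auto
    then show ?thesis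
      by (simp add: w_def distrib_left)
  qed
  have "disjoint_family H"
    using H separated by (intro disjoint_family_shells[of H w L]) auto
  define a where "a m = (\<bar>t0 + L * real m\<bar> + L) ^ (CARD('n) - 1) * exp (- real k * r (t0 + L * real m))" for m
  have a_shift: "a (m + m0) = (w m + L) ^ (CARD('n) - 1) * exp (- real k * r (w m))" for m
    using w_ge(1)[of m] \<open>U \<ge> 0\<close> by (simp add: a_def w_def)
  have "c * C1 / E > 0"
    using \<open>c > 0\<close> \<open>C1 > 0\<close> \<open>E \<ge> 1\<close> by simp
  then have "\<infinity> = (\<Sum>m. ennreal (c * C1 / E * min 1 (a (m + m0))))"
    using quasi_increasing_series_diverges[OF assms(9) _ div] \<open>L \<ge> 1\<close>
    by (intro suminf_cmult_min_1_shift_eq_top[symmetric]) (auto simp: a_def)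
  also have "\<dots> \<le> (\<Sum>m. \<Sum>z\<in>H m. emeasure M {x \<in> space M. r (norm z) \<le> \<Delta> x})"
    unfolding a_shift using H \<open>U \<ge> 0\<close> w_ge
    by (intro suminf_le shell_superlevel_sum_lower_bound[OF assms(1) \<open>C1 > 0\<close> Phi \<open>E \<ge> 1\<close> E \<open>L \<ge> 1\<close>
          _ _ \<open>c > 0\<close>]) (auto intro: order_trans)
  also have "\<dots> \<le> (\<integral>\<^sup>+ z. emeasure M {x \<in> space M. r (norm z) \<le> \<Delta> x} \<partial>count_space (C \<inter> \<Sigma>))"
    using H by (intro suminf_sum_disjoint_le_nn_integral_count_space \<open>disjoint_family H\<close>) auto
  finally show ?thesis
    by (simp add: top_unique)
qed

lemma borel_cantelli_AE_unbounded:
  fixes M :: "'a measure" and I :: "'v::real_normed_vector set" and f :: "'v \<Rightarrow> 'a \<Rightarrow> 'a"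
  assumes "prob_space M" and "borel_cantelli M \<Delta> I f"
    and bounded_finite: "\<And>R. finite {z \<in> I. norm z \<le> R}"
    and diverges: "(\<integral>\<^sup>+ z. emeasure M {x \<in> space M. s z \<le> \<Delta> x} \<partial>count_space I) = \<infinity>"
  shows "AE x in M. \<forall>R. \<exists>z\<in>I. R < norm z \<and> s z \<le> \<Delta> (f z x)"
proof -
  interpret prob_space M by fact
  define E where "E = {x \<in> space M. infinite {z \<in> I. f z x \<in> {y \<in> space M. s z \<le> \<Delta> y}}}"
  have "emeasure M E = 1"
    using \<open>borel_cantelli M \<Delta> I f\<close> diverges unfolding borel_cantelli_def Let_def E_def by blast
  moreover from this have "E \<in> sets M"
    using emeasure_notin_sets by fastforce
  ultimately have "AE x in M. x \<in> E"
    by (simp add: AE_in_set_eq_1 emeasure_eq_measure)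
  then show ?thesis
  proof (rule AE_mp, intro AE_I2 impI allI)
    fix x R assume "x \<in> E"
    then have "infinite {z \<in> I. f z x \<in> {y \<in> space M. s z \<le> \<Delta> y}}"
      by (simp add: E_def)
    then have "\<not> {z \<in> I. f z x \<in> {y \<in> space M. s z \<le> \<Delta> y}} \<subseteq> {z \<in> I. norm z \<le> R}"
      using bounded_finite finite_subset by blast
    then show "\<exists>z\<in>I. R < norm z \<and> s z \<le> \<Delta> (f z x)"
      by (auto simp: not_le)
  qed
qed

lemma AE_unbounded_cone_hits:
  fixes M :: "'a::metric_space measure" and C \<Sigma> :: "(real ^ 'n::finite) set"
    and f :: "real ^ 'n \<Rightarrow> 'a \<Rightarrow> 'a" and \<Delta> :: "'a \<Rightarrow> real" and r :: "real \<Rightarrow> real"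
  assumes "prob_space M" and "sets M = sets borel" and "kDL M k \<Delta>"
    and "is_lattice \<Sigma>" and "C \<noteq> {}" and "open C" and "pos_cone C"
    and "\<And>z w. z \<in> C \<Longrightarrow> w \<in> C \<Longrightarrow> z + w \<in> C"
    and "quasi_increasing t0 r"
    and "(\<integral>\<^sup>+ t\<in>{t0..}. ennreal (t ^ (CARD('n) - 1) * exp (- real k * r t)) \<partial>lborel) = \<infinity>"
    and "borel_cantelli M \<Delta> (C \<inter> \<Sigma>) f"
  shows "AE x in M. \<forall>R. \<exists>z\<in>C. R < norm z \<and> r (norm z) \<le> \<Delta> (f z x)"
proof -
  have "finite {z \<in> C \<inter> \<Sigma>. norm z \<le> R}" for R
    using lattice_bounded_finite[OF \<open>is_lattice \<Sigma>\<close>, of R] by (rule finite_subset[rotated]) auto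
  then have "AE x in M. \<forall>R. \<exists>z\<in>C \<inter> \<Sigma>. R < norm z \<and> r (norm z) \<le> \<Delta> (f z x)"
    by (intro borel_cantelli_AE_unbounded[OF assms(1,11)] lattice_cone_superlevel_sum_diverges[OF assms(1-10)])
  then show ?thesis
    by (rule eventually_mono) blast
qed

lemma Limsup_at_infinity_principal_ge:
  fixes g :: "'a::real_normed_vector \<Rightarrow> 'b::complete_linorder"
  assumes "\<And>R. \<exists>z\<in>C. R < norm z \<and> l \<le> g z"
  shows "l \<le> Limsup (at_infinity \<sqinter> principal C) g"
proof (rule Limsup_greatest)
  fix P assume "eventually P (at_infinity \<sqinter> principal C)"
  then obtain b where b: "\<And>z. b \<le> norm z \<Longrightarrow> z \<in> C \<Longrightarrow> P z"
    by (auto simp: eventually_inf_principal eventually_at_infinity)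
  obtain z where "z \<in> C" and "b < norm z" and "l \<le> g z"
    using assms by blast
  then show "l \<le> (SUP z\<in>Collect P. g z)"
    using b by (intro SUP_upper2[of z]) auto
qed

theorem lemma2p8:
  fixes M :: "'a::metric_space measure"
    and C :: "(real ^ 'n) set"
    and f :: "real ^ 'n \<Rightarrow> 'a \<Rightarrow> 'a"
    and \<Delta> :: "'a \<Rightarrow> real"
    and k :: nat and t0 :: real and r :: "real \<Rightarrow> real"
    and \<Sigma> :: "(real ^ 'n) set"
  assumes prob: "prob_space M"
    and borel: "sets M = sets borel"
    and k_pos: "k > 0"
    and C_ne: "C \<noteq> {}" and C_open: "open C" and C_cone: "pos_cone C"
    and C_add: "\<And>z w. z \<in> C \<Longrightarrow> w \<in> C \<Longrightarrow> z + w \<in> C"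
    and f_mp: "\<And>z. z \<in> C \<Longrightarrow> meas_pres M (f z)"
    and f_hom: "\<And>z w. z \<in> C \<Longrightarrow> w \<in> C \<Longrightarrow> f (z + w) = f z \<circ> f w"
    and f_cont: "\<And>z e. z \<in> C \<Longrightarrow> e > 0 \<Longrightarrow>
                   \<exists>\<delta>>0. \<forall>w\<in>C. dist w z < \<delta> \<longrightarrow> map_dist (f w) (f z) < ereal e"
    and DL: "kDL M k \<Delta>"
    and qi: "quasi_increasing t0 r"
    and div: "(\<integral>\<^sup>+ t\<in>{t0..}. ennreal (t ^ (CARD('n) - 1) * exp (- real k * r t)) \<partial>lborel) = \<infinity>"
    and lat: "is_lattice \<Sigma>"
    and BC: "borel_cantelli M \<Delta> (C \<inter> \<Sigma>) f"
  shows "(AE x in M. \<forall>R. \<exists>z\<in>C. norm z > R \<and> \<Delta> (f z x) \<ge> r (norm z))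
       \<and> (AE x in M. Limsup (at_infinity \<sqinter> principal C) (\<lambda>z. ereal (\<Delta> (f z x) / ln (norm z)))
                      \<ge> ereal (real CARD('n) / real k))"
proof
  show "AE x in M. \<forall>R. \<exists>z\<in>C. norm z > R \<and> \<Delta> (f z x) \<ge> r (norm z)"
    by (rule AE_unbounded_cone_hits[OF prob borel DL lat C_ne C_open C_cone C_add qi div BC])
next
  define \<rho> where "\<rho> t = real CARD('n) / real k * ln t" for t
  have "quasi_increasing 1 \<rho>"
    unfolding \<rho>_def by (intro mono_on_imp_quasi_increasing mono_onI mult_left_mono) auto
  moreover have "(\<integral>\<^sup>+ t\<in>{1..}. ennreal (t ^ (CARD('n) - 1) * exp (- real k * \<rho> t)) \<partial>lborel) = \<infinity>"
    unfolding \<rho>_def using k_pos by (intro nn_integral_log_profile_diverges) (simp_all add: Suc_le_eq)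
  ultimately have "AE x in M. \<forall>R. \<exists>z\<in>C. R < norm z \<and> \<rho> (norm z) \<le> \<Delta> (f z x)"
    by (intro AE_unbounded_cone_hits[OF prob borel DL lat C_ne C_open C_cone C_add _ _ BC])
  then show "AE x in M. Limsup (at_infinity \<sqinter> principal C) (\<lambda>z. ereal (\<Delta> (f z x) / ln (norm z)))
               \<ge> ereal (real CARD('n) / real k)"
  proof (rule eventually_mono)
    fix x assume hits: "\<forall>R. \<exists>z\<in>C. R < norm z \<and> \<rho> (norm z) \<le> \<Delta> (f z x)"
    show "ereal (real CARD('n) / real k) \<le> Limsup (at_infinity \<sqinter> principal C) (\<lambda>z. ereal (\<Delta> (f z x) / ln (norm z)))"
    proof (rule Limsup_at_infinity_principal_ge)
      fix R
      obtain z where "z \<in> C" and "max R 1 < norm z" and "\<rho> (norm z) \<le> \<Delta> (f z x)"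
        using hits by blast
      moreover from this have "ln (norm z) > 0"
        by (intro ln_gt_zero) simp
      ultimately show "\<exists>z\<in>C. R < norm z \<and> ereal (real CARD('n) / real k) \<le> ereal (\<Delta> (f z x) / ln (norm z))"
        by (intro bexI[of _ z]) (auto simp: \<rho>_def le_divide_eq mult.commute)
    qed
  qed
qed

end
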